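(* Let $f(n,k)$ be the number of sets of exactly $k$ distinct integers $1\le p_1<p_2<\cdots<p_k\le n$ with $p_1+\cdots+p_j\le p_{j+1}$ for $1\le j\le k-1$. Then $f(n,0)=1$ for all $n\ge0$, and for $n\ge1$, $k\ge1$, $$f(n,k)=\sum_{p=0}^{\min\{k-1,\,n-\gamma(k)\}}\ \sum_{m=p}^{n-\gamma(k)}\bigl(n-\gamma(k)+1-m\bigr)\,a(m,p),$$ where an empty sum (in particular when $n<\gamma(k)$) is $0$.
   Context: A partition $n=p_1+\cdots+p_k$ with $1\le p_1\le\cdots\le p_k$ is non-squashing if $p_1+\cdots+p_j\le p_{j+1}$ for all $1\le j\le k-1$. $a(m,p)$ is the number of non-squashing partitions of $m$ into exactly $p$ parts (with $a(0,0)=1$ for the empty partition and $a(m,0)=0$ for $m\ge1$). The function $\gamma$ is defined by $\gamma(i)=i$ for $1\le i\le3$ and $\gamma(i)=3\cdot2^{i-3}$ for $i\ge3$ (so $\gamma$ takes values $1,2,3,6,12,24,\dots$). *)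

theory Defs
  imports Main
begin

text \<open>Non-squashing condition on a list p_1,...,p_k (1-based in the paper, 0-based here):
  p_1 + ... + p_j <= p_(j+1) for 1 <= j <= k-1.\<close>
definition non_squashing :: "nat list \<Rightarrow> bool" where
  "non_squashing ps \<longleftrightarrow> (\<forall>j. 1 \<le> j \<and> j < length ps \<longrightarrow> sum_list (take j ps) \<le> ps ! j)"

definition a_ns :: "nat \<Rightarrow> nat \<Rightarrow> nat" where
  "a_ns m p = card {ps. length ps = p \<and> sum_list ps = m \<and> (\<forall>x\<in>set ps. 1 \<le> x)
                        \<and> sorted ps \<and> non_squashing ps}"

definition gamma :: "nat \<Rightarrow> nat" where
  "gamma i = (if i \<le> 3 then i else 3 * 2 ^ (i - 3))"

definition f_ns :: "nat \<Rightarrow> nat \<Rightarrow> nat" where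
  "f_ns n k = card {S. S \<subseteq> {1..n} \<and> card S = k \<and> non_squashing (sorted_list_of_set S)}"

end

theory Submission
  imports Defs
begin

text \<open>Subtracting \<open>\<gamma>(i)\<close> from the \<open>i\<close>-th entry is a bijection from the strictly increasing
  non-squashing sequences of positive integers onto the non-squashing sequences of natural
  numbers (zero entries allowed). Indeed \<open>1, 2, 3, 6, 12, \<dots>\<close> is the least admissible sequence
  and \<open>\<gamma>(1) + \<dots> + \<gamma>(j) = \<gamma>(j + 1)\<close> for \<open>j \<ge> 3\<close>, so the shift leaves the non-squashing
  inequalities unchanged, except that \<open>p\<^sub>1 < p\<^sub>2\<close> becomes \<open>q\<^sub>1 \<le> q\<^sub>2\<close>. The bound
  \<open>p\<^sub>k \<le> n\<close> becomes \<open>q\<^sub>k \<le> N = n - \<gamma>(k)\<close>. If the first \<open>k - 1\<close> entries of \<open>q\<close> sum to \<open>m\<close>,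
  the last one ranges over \<open>m..N\<close>, giving \<open>N + 1 - m\<close> choices; deleting the leading zeros of the
  first \<open>k - 1\<close> entries leaves a non-squashing partition of \<open>m\<close> into \<open>p \<le> k - 1\<close> parts.\<close>

fun non_squashing_from :: "nat \<Rightarrow> nat list \<Rightarrow> bool" where
  "non_squashing_from s [] = True"
| "non_squashing_from s (x # xs) \<longleftrightarrow> s \<le> x \<and> non_squashing_from (s + x) xs"

lemma non_squashing_from_iff_nth:
  "non_squashing_from s xs \<longleftrightarrow> (\<forall>j<length xs. s + sum_list (take j xs) \<le> xs ! j)"
  by (induction xs arbitrary: s) (auto simp: All_less_Suc2 add.assoc)

lemma non_squashing_eq_from_0: "non_squashing xs = non_squashing_from 0 xs"
proof -
  have "sum_list (take j xs) \<le> xs ! j" if "j = 0" for j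
    using that by simp
  then show ?thesis
    unfolding non_squashing_def non_squashing_from_iff_nth
    by (metis add_0 less_one not_less)
qed

lemma non_squashing_from_ge: "non_squashing_from s xs \<Longrightarrow> y \<in> set xs \<Longrightarrow> s \<le> y"
  by (induction xs arbitrary: s) fastforce+

lemma non_squashing_from_sorted: "non_squashing_from s xs \<Longrightarrow> sorted xs"
  by (induction xs arbitrary: s) (auto dest: non_squashing_from_ge)

lemma non_squashing_from_strict: "0 < s \<Longrightarrow> non_squashing_from s xs \<Longrightarrow> sorted_wrt (<) xs"
proof (induction xs arbitrary: s)
  case (Cons x xs)
  then show ?case
    using Cons.IH[of "s + x"] by (fastforce dest: non_squashing_from_ge)
qed simp

lemma non_squashing_from_snoc:
  "non_squashing_from s (xs @ [x]) \<longleftrightarrow> non_squashing_from s xs \<and> s + sum_list xs \<le> x"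
  by (induction xs arbitrary: s) (auto simp: add.assoc)

lemma non_squashing_from_0_replicate_0:
  "non_squashing_from 0 (replicate r 0 @ xs) = non_squashing_from 0 xs"
  by (induction r) auto

lemma non_squashing_from_0_split_zeros:
  "non_squashing_from 0 qs \<Longrightarrow> \<exists>r ps. qs = replicate r 0 @ ps \<and> (\<forall>x\<in>set ps. 0 < x)"
proof (induction qs)
  case (Cons x xs)
  show ?case
  proof (cases "x = 0")
    case True
    with Cons obtain r ps where "xs = replicate r 0 @ ps" "\<forall>y\<in>set ps. 0 < y" by auto
    with True show ?thesis by (metis replicate_Suc append_Cons)
  next
    case False
    with Cons.prems have "\<forall>y\<in>set (x # xs). 0 < y" by (auto dest: non_squashing_from_ge)
    then show ?thesis by (metis replicate_0 append_Nil)
  qed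
qed simp

lemma sorted_le_last: "sorted xs \<Longrightarrow> y \<in> set xs \<Longrightarrow> y \<le> last xs"
  by (induction xs rule: rev_induct) (auto simp: sorted_append)

lemma gamma_ge_3: "3 \<le> i \<Longrightarrow> gamma i = 3 * 2 ^ (i - 3)"
  by (simp add: gamma_def)

lemma gamma_Suc_Suc_double: "2 \<le> i \<Longrightarrow> gamma (Suc (Suc i)) = 2 * gamma (Suc i)"
  by (auto simp: gamma_ge_3 dest!: le_Suc_ex)

fun add_gammas :: "nat \<Rightarrow> nat list \<Rightarrow> nat list" where
  "add_gammas i [] = []"
| "add_gammas i (q # qs) = (q + gamma (Suc i)) # add_gammas (Suc i) qs"

lemma length_add_gammas [simp]: "length (add_gammas i qs) = length qs"
  by (induction qs arbitrary: i) auto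

lemma add_gammas_eq_Nil_iff [simp]: "add_gammas i qs = [] \<longleftrightarrow> qs = []"
  by (cases qs) auto

lemma inj_add_gammas: "inj (add_gammas i)"
proof (rule injI)
  show "add_gammas i xs = add_gammas i ys \<Longrightarrow> xs = ys" for xs ys
  proof (induction xs arbitrary: i ys)
    case Nil
    then show ?case by (cases ys) auto
  next
    case (Cons x xs)
    then show ?case by (cases ys) auto
  qed
qed

lemma last_add_gammas: "qs \<noteq> [] \<Longrightarrow> last (add_gammas i qs) = last qs + gamma (i + length qs)"
  by (induction qs arbitrary: i) auto

lemma non_squashing_from_add_gammas:
  "2 \<le> i \<Longrightarrow> non_squashing_from (s + gamma (Suc i)) (add_gammas i qs) = non_squashing_from s qs"
proof (induction qs arbitrary: i s)
  case (Cons q qs)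
  \<comment> \<open>The offset grows by the shifted entry, i.e. by \<open>\<gamma>(i + 1)\<close> more than the unshifted offset,
    which is exactly the increase from \<open>\<gamma>(i + 1)\<close> to \<open>\<gamma>(i + 2)\<close>.\<close>
  have "gamma (Suc (Suc i)) = gamma (Suc i) + gamma (Suc i)"
    using gamma_Suc_Suc_double[OF Cons.prems] by simp
  then show ?case
    using Cons.IH[of "Suc i" "s + q"] Cons.prems by (simp add: ac_simps)
qed simp

lemma non_squashing_from_in_range_add_gammas:
  "2 \<le> i \<Longrightarrow> gamma (Suc i) \<le> t \<Longrightarrow> non_squashing_from t ps \<Longrightarrow> ps \<in> range (add_gammas i)"
proof (induction ps arbitrary: i t)
  case Nil
  show ?case by (metis add_gammas.simps(1) rangeI)
next
  case (Cons x xs)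
  have "gamma (Suc (Suc i)) \<le> t + x"
    using gamma_Suc_Suc_double[OF Cons.prems(1)] Cons.prems by simp
  then obtain qs where "xs = add_gammas (Suc i) qs"
    using Cons.IH[of "Suc i" "t + x"] Cons.prems by auto
  then have "x # xs = add_gammas i ((x - gamma (Suc i)) # qs)"
    using Cons.prems by simp
  then show ?case by blast
qed

lemma add_gammas_0_strict_non_squashing:
  assumes "non_squashing_from 0 q"
  shows "sorted_wrt (<) (add_gammas 0 q) \<and> (\<forall>x\<in>set (add_gammas 0 q). 0 < x)
    \<and> non_squashing_from 0 (add_gammas 0 q)"
  \<comment> \<open>\<open>remdups_adj.cases\<close> distinguishes \<open>[]\<close>, \<open>[x]\<close> and \<open>x # y # rest\<close>.\<close>
proof (cases q rule: remdups_adj.cases)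
  case (3 q0 q1 rest)
  with assms have "q0 \<le> q1" and rest: "non_squashing_from (q0 + q1) rest" by auto
  have tail: "non_squashing_from (q0 + q1 + 3) (add_gammas 2 rest)"
    using non_squashing_from_add_gammas[of 2 "q0 + q1" rest] rest by (simp add: gamma_def)
  have "\<forall>y\<in>set (add_gammas 2 rest). q0 + q1 + 3 \<le> y"
    using non_squashing_from_ge[OF tail] by blast
  with tail \<open>q0 \<le> q1\<close> show ?thesis
    using non_squashing_from_strict[OF _ tail] 3
    by (auto simp: gamma_def numeral_2_eq_2 numeral_3_eq_3 add.assoc)
qed (auto simp: gamma_def)

lemma strict_non_squashing_in_range_add_gammas_0:
  assumes "sorted_wrt (<) p" "\<forall>x\<in>set p. 0 < x" "non_squashing_from 0 p"
  shows "\<exists>q. p = add_gammas 0 q \<and> non_squashing_from 0 q"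
proof (cases p rule: remdups_adj.cases)
  case 1
  then show ?thesis by (intro exI[of _ "[]"]) simp
next
  case (2 x)
  with assms show ?thesis by (intro exI[of _ "[x - 1]"]) (auto simp: gamma_def)
next
  case (3 p0 p1 rest)
  with assms have "0 < p0" "p0 < p1" and rest: "non_squashing_from (p0 + p1) rest" by auto
  then obtain qs where qs: "rest = add_gammas 2 qs"
    using non_squashing_from_in_range_add_gammas[of 2 "p0 + p1" rest] by (auto simp: gamma_def)
  have "non_squashing_from (p0 + p1 - 3) qs"
    using rest non_squashing_from_add_gammas[of 2 "p0 + p1 - 3" qs] \<open>0 < p0\<close> \<open>p0 < p1\<close>
    by (simp add: qs gamma_def)
  then have "p = add_gammas 0 ((p0 - 1) # (p1 - 2) # qs) \<and> non_squashing_from 0 ((p0 - 1) # (p1 - 2) # qs)"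
    using 3 qs \<open>0 < p0\<close> \<open>p0 < p1\<close> by (auto simp: gamma_def numeral_2_eq_2 numeral_3_eq_3)
  then show ?thesis by blast
qed

lemma card_subsets_eq_card_strict_lists:
  fixes A :: "'a::linorder set"
  assumes "finite A"
  shows "card {S. S \<subseteq> A \<and> P (sorted_list_of_set S)} = card {xs. sorted_wrt (<) xs \<and> set xs \<subseteq> A \<and> P xs}"
proof (rule bij_betw_same_card, rule bij_betw_byWitness[where f' = set])
  show "\<forall>S\<in>{S. S \<subseteq> A \<and> P (sorted_list_of_set S)}. set (sorted_list_of_set S) = S"
    using finite_subset[OF _ assms] by simp
  show "\<forall>xs\<in>{xs. sorted_wrt (<) xs \<and> set xs \<subseteq> A \<and> P xs}. sorted_list_of_set (set xs) = xs"
    by (auto simp: strict_sorted_iff sorted_list_of_set.idem_if_sorted_distinct)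
  show "sorted_list_of_set ` {S. S \<subseteq> A \<and> P (sorted_list_of_set S)} \<subseteq> {xs. sorted_wrt (<) xs \<and> set xs \<subseteq> A \<and> P xs}"
    using finite_subset[OF _ assms] by auto
  show "set ` {xs. sorted_wrt (<) xs \<and> set xs \<subseteq> A \<and> P xs} \<subseteq> {S. S \<subseteq> A \<and> P (sorted_list_of_set S)}"
    by (auto simp: strict_sorted_iff sorted_list_of_set.idem_if_sorted_distinct)
qed

lemma f_ns_eq_card_strict_lists:
  "f_ns n k = card {p. sorted_wrt (<) p \<and> set p \<subseteq> {1..n} \<and> length p = k \<and> non_squashing p}"
  using card_subsets_eq_card_strict_lists[of "{1..n}" "\<lambda>p. length p = k \<and> non_squashing p"]
  by (simp add: f_ns_def)

lemma strict_lists_eq_image_add_gammas: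
  assumes "1 \<le> k"
  shows "{p. sorted_wrt (<) p \<and> set p \<subseteq> {1..n} \<and> length p = k \<and> non_squashing p} =
    add_gammas 0 ` {q. length q = k \<and> non_squashing_from 0 q \<and> last q + gamma k \<le> n}"
proof (intro equalityI subsetI)
  fix p assume "p \<in> {p. sorted_wrt (<) p \<and> set p \<subseteq> {1..n} \<and> length p = k \<and> non_squashing p}"
  then have p: "sorted_wrt (<) p" "set p \<subseteq> {1..n}" "length p = k" "non_squashing_from 0 p"
    by (auto simp: non_squashing_eq_from_0)
  then obtain q where q: "p = add_gammas 0 q" "non_squashing_from 0 q"
    using strict_non_squashing_in_range_add_gammas_0[of p] by fastforce
  have "q \<noteq> []" "length q = k" using q(1) p(3) assms by auto
  then have "last q + gamma k = last p"
    using q(1) last_add_gammas[of q 0] by simp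
  also have "\<dots> \<le> n"
    using p(2,3) assms last_in_set[of p] by fastforce
  finally show "p \<in> add_gammas 0 ` {q. length q = k \<and> non_squashing_from 0 q \<and> last q + gamma k \<le> n}"
    using q \<open>length q = k\<close> by blast
next
  fix p assume "p \<in> add_gammas 0 ` {q. length q = k \<and> non_squashing_from 0 q \<and> last q + gamma k \<le> n}"
  then obtain q where q: "p = add_gammas 0 q" "length q = k" "non_squashing_from 0 q" "last q + gamma k \<le> n"
    by auto
  then have p: "sorted_wrt (<) p" "\<forall>x\<in>set p. 0 < x" "non_squashing_from 0 p"
    using add_gammas_0_strict_non_squashing by blast+
  have "q \<noteq> []" using q(2) assms by auto
  then have "last p \<le> n"
    using q last_add_gammas[of q 0] by simp
  then have "set p \<subseteq> {1..n}"
    using p(2) sorted_le_last[of p] p(1) by (fastforce simp: strict_sorted_iff)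
  then show "p \<in> {p. sorted_wrt (<) p \<and> set p \<subseteq> {1..n} \<and> length p = k \<and> non_squashing p}"
    using p q(1,2) by (simp add: non_squashing_eq_from_0)
qed

lemma f_ns_eq_card_shifted:
  assumes "1 \<le> k"
  shows "f_ns n k = card {q. length q = k \<and> non_squashing_from 0 q \<and> last q + gamma k \<le> n}"
  unfolding f_ns_eq_card_strict_lists strict_lists_eq_image_add_gammas[OF assms]
  by (rule card_image) (meson inj_add_gammas inj_on_subset subset_UNIV)

lemma finite_lists_length_le_sum_le: "finite {xs :: nat list. length xs \<le> k \<and> sum_list xs \<le> N}"
proof (rule finite_subset)
  show "{xs :: nat list. length xs \<le> k \<and> sum_list xs \<le> N} \<subseteq> {xs. set xs \<subseteq> {0..N} \<and> length xs \<le> k}"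
    using member_le_sum_list by fastforce
qed (simp add: finite_lists_length_le)

lemma card_non_squashing_last_le_eq_sum:
  "card {q. length q = Suc k \<and> non_squashing_from 0 q \<and> last q \<le> N} =
    (\<Sum>qs | length qs = k \<and> non_squashing_from 0 qs \<and> sum_list qs \<le> N. Suc N - sum_list qs)"
proof -
  let ?R = "{qs. length qs = k \<and> non_squashing_from 0 qs \<and> sum_list qs \<le> N}"
  let ?snoc = "\<lambda>(qs, x). qs @ [x]"
  have "finite ?R"
    by (rule finite_subset[OF _ finite_lists_length_le_sum_le[of k N]]) auto
  have "{q. length q = Suc k \<and> non_squashing_from 0 q \<and> last q \<le> N} = ?snoc ` (SIGMA qs:?R. {sum_list qs..N})"
  proof (intro equalityI subsetI)
    fix q assume q: "q \<in> {q. length q = Suc k \<and> non_squashing_from 0 q \<and> last q \<le> N}"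
    then have q_eq: "q = butlast q @ [last q]"
      by (auto simp: length_Suc_conv_rev)
    have "non_squashing_from 0 (butlast q @ [last q])"
      using q q_eq by simp
    then have "(butlast q, last q) \<in> (SIGMA qs:?R. {sum_list qs..N})"
      using q by (simp add: non_squashing_from_snoc)
    moreover have "q = ?snoc (butlast q, last q)"
      by (simp add: q_eq[symmetric])
    ultimately show "q \<in> ?snoc ` (SIGMA qs:?R. {sum_list qs..N})"
      by (rule rev_image_eqI)
  qed (auto simp: non_squashing_from_snoc)
  moreover have "inj_on ?snoc (SIGMA qs:?R. {sum_list qs..N})"
    by (rule inj_onI) auto
  ultimately show ?thesis
    using \<open>finite ?R\<close> by (simp add: card_image)
qed

lemma card_non_squashing_last_le:
  "card {q. length q = Suc k \<and> non_squashing_from 0 q \<and> last q \<le> N} =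
    (\<Sum>m\<le>N. (Suc N - m) * card {qs. length qs = k \<and> non_squashing_from 0 qs \<and> sum_list qs = m})"
proof -
  let ?R = "{qs. length qs = k \<and> non_squashing_from 0 qs \<and> sum_list qs \<le> N}"
  have "finite ?R"
    by (rule finite_subset[OF _ finite_lists_length_le_sum_le[of k N]]) auto
  have "(\<Sum>qs\<in>?R. Suc N - sum_list qs) = (\<Sum>m\<le>N. \<Sum>qs | qs \<in> ?R \<and> sum_list qs = m. Suc N - sum_list qs)"
    by (rule sum.group[symmetric]) (use \<open>finite ?R\<close> in auto)
  also have "\<dots> = (\<Sum>m\<le>N. (Suc N - m) * card {qs. length qs = k \<and> non_squashing_from 0 qs \<and> sum_list qs = m})"
  proof (rule sum.cong[OF refl])
    fix m assume "m \<in> {..N}"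
    then have "{qs. qs \<in> ?R \<and> sum_list qs = m} = {qs. length qs = k \<and> non_squashing_from 0 qs \<and> sum_list qs = m}"
      by auto
    then show "(\<Sum>qs | qs \<in> ?R \<and> sum_list qs = m. Suc N - sum_list qs) =
        (Suc N - m) * card {qs. length qs = k \<and> non_squashing_from 0 qs \<and> sum_list qs = m}"
      by simp
  qed
  finally show ?thesis
    by (simp add: card_non_squashing_last_le_eq_sum)
qed

lemma card_length_le_eq_sum_card_length_eq:
  assumes "finite {xs. length xs \<le> k \<and> P xs}"
  shows "card {xs. length xs \<le> k \<and> P xs} = (\<Sum>p\<le>k. card {xs. length xs = p \<and> P xs})"
proof -
  have "{xs. length xs \<le> k \<and> P xs} = (\<Union>p\<le>k. {xs. length xs = p \<and> P xs})"
    by auto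
  moreover have "finite {xs. length xs = p \<and> P xs}" if "p \<le> k" for p
    using that by (auto intro: finite_subset[OF _ assms])
  ultimately show ?thesis
    by (simp add: card_UN_disjoint disjoint_iff)
qed

lemma card_non_squashing_sum_eq:
  "card {qs. length qs = k \<and> non_squashing_from 0 qs \<and> sum_list qs = m} = (\<Sum>p\<le>k. a_ns m p)"
proof -
  let ?Pos = "{ps. length ps \<le> k \<and> sum_list ps = m \<and> (\<forall>x\<in>set ps. 1 \<le> x) \<and> sorted ps \<and> non_squashing ps}"
  let ?pad = "\<lambda>ps. replicate (k - length ps) 0 @ ps"
  have "{qs. length qs = k \<and> non_squashing_from 0 qs \<and> sum_list qs = m} = ?pad ` ?Pos"
  proof (intro equalityI subsetI)
    fix qs assume qs: "qs \<in> {qs. length qs = k \<and> non_squashing_from 0 qs \<and> sum_list qs = m}"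
    then obtain r ps where ps: "qs = replicate r 0 @ ps" "\<forall>x\<in>set ps. 0 < x"
      using non_squashing_from_0_split_zeros by blast
    then have "non_squashing_from 0 ps"
      using qs non_squashing_from_0_replicate_0 by simp
    then have "ps \<in> ?Pos"
      using qs ps by (auto simp: non_squashing_eq_from_0 Suc_le_eq non_squashing_from_sorted)
    moreover have "qs = ?pad ps"
      using qs ps by auto
    ultimately show "qs \<in> ?pad ` ?Pos"
      by (rule rev_image_eqI)
  qed (auto simp: non_squashing_from_0_replicate_0 non_squashing_eq_from_0)
  moreover have "inj_on ?pad ?Pos"
    by (rule inj_on_inverseI[where g = "filter (\<lambda>x. 0 < x)"])
      (auto simp: filter_replicate Suc_le_eq intro!: filter_True)
  moreover have "finite ?Pos"
    by (rule finite_subset[OF _ finite_lists_length_le_sum_le[of k m]]) auto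
  ultimately show ?thesis
    by (simp add: card_image card_length_le_eq_sum_card_length_eq a_ns_def)
qed

lemma a_ns_eq_0:
  assumes "m < p"
  shows "a_ns m p = 0"
proof -
  have "length ps \<le> sum_list ps" if "\<forall>x\<in>set ps. 1 \<le> x" for ps :: "nat list"
    using that by (induction ps) auto
  then have "{ps. length ps = p \<and> sum_list ps = m \<and> (\<forall>x\<in>set ps. 1 \<le> x) \<and> sorted ps \<and> non_squashing ps} = {}"
    using assms by fastforce
  then show ?thesis
    unfolding a_ns_def by (metis card.empty)
qed

lemma sum_atMost_swap_triangular:
  fixes a :: "nat \<Rightarrow> nat \<Rightarrow> 'a::semiring_0"
  assumes "\<And>m p. m < p \<Longrightarrow> a m p = 0"
  shows "(\<Sum>m\<le>N. w m * (\<Sum>p\<le>k. a m p)) = (\<Sum>p\<in>{0..min k N}. \<Sum>m\<in>{p..N}. w m * a m p)"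
proof -
  have "(\<Sum>m\<le>N. w m * (\<Sum>p\<le>k. a m p)) = (\<Sum>p\<le>k. \<Sum>m\<le>N. w m * a m p)"
    by (simp add: sum_distrib_left sum.swap[of _ "{..N}"])
  also have "\<dots> = (\<Sum>p\<le>k. \<Sum>m\<in>{p..N}. w m * a m p)"
    by (intro sum.cong refl sum.mono_neutral_right) (auto simp: assms)
  also have "\<dots> = (\<Sum>p\<in>{0..min k N}. \<Sum>m\<in>{p..N}. w m * a m p)"
    by (rule sum.mono_neutral_right) auto
  finally show ?thesis .
qed

lemma f_ns_0: "f_ns n 0 = 1"
proof -
  have "{p. sorted_wrt (<) p \<and> set p \<subseteq> {1..n} \<and> length p = 0 \<and> non_squashing p} = {[]}"
    by (auto simp: non_squashing_def)
  then show ?thesis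
    by (simp add: f_ns_eq_card_strict_lists)
qed

lemma f_ns_eq_0:
  assumes "1 \<le> k" "n < gamma k"
  shows "f_ns n k = 0"
proof -
  have "{q. length q = k \<and> non_squashing_from 0 q \<and> last q + gamma k \<le> n} = {}"
    using assms(2) by auto
  then show ?thesis
    using f_ns_eq_card_shifted[OF assms(1)] by (simp only: card.empty)
qed

lemma f_ns_eq_double_sum_nat:
  assumes "1 \<le> k" "gamma k \<le> n"
  shows "f_ns n k = (\<Sum>p\<in>{0..min (k - 1) (n - gamma k)}. \<Sum>m\<in>{p..n - gamma k}.
    (n - gamma k + 1 - m) * a_ns m p)"
proof -
  obtain j where k: "k = Suc j"
    using assms(1) by (cases k) auto
  define N where "N = n - gamma k"
  have "{q. length q = k \<and> non_squashing_from 0 q \<and> last q + gamma k \<le> n} =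
      {q. length q = Suc j \<and> non_squashing_from 0 q \<and> last q \<le> N}"
    using assms(2) by (auto simp: k N_def)
  then have "f_ns n k = (\<Sum>m\<le>N. (Suc N - m) * (\<Sum>p\<le>j. a_ns m p))"
    by (simp add: f_ns_eq_card_shifted[OF assms(1)] card_non_squashing_last_le card_non_squashing_sum_eq)
  also have "\<dots> = (\<Sum>p\<in>{0..min j N}. \<Sum>m\<in>{p..N}. (Suc N - m) * a_ns m p)"
    by (rule sum_atMost_swap_triangular) (rule a_ns_eq_0)
  finally show ?thesis
    by (simp add: k N_def)
qed

lemma of_nat_double_sum_atLeastAtMost:
  "int (\<Sum>p\<in>{0..P}. \<Sum>m\<in>{p..N}. (N + 1 - m) * a m p) =
    (\<Sum>p\<in>{0..int P}. \<Sum>m\<in>{p..int N}. (int N + 1 - m) * int (a (nat m) (nat p)))"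
proof -
  have shift: "(\<Sum>i\<in>{int u..int v}. F i) = (\<Sum>i\<in>{u..v}. F (int i))" for u v and F :: "int \<Rightarrow> int"
    using sum.atLeast_int_atMost_int_shift[of F u v] by simp
  have "(\<Sum>p\<in>{0..int P}. \<Sum>m\<in>{p..int N}. (int N + 1 - m) * int (a (nat m) (nat p))) =
      (\<Sum>p\<in>{0..P}. \<Sum>m\<in>{p..N}. (int N + 1 - int m) * int (a m p))"
    using shift[where u = 0 and v = P] by (simp add: shift)
  also have "\<dots> = int (\<Sum>p\<in>{0..P}. \<Sum>m\<in>{p..N}. (N + 1 - m) * a m p)"
    by (simp add: of_nat_sum of_nat_diff add.commute)
  finally show ?thesis ..
qed

lemma int_f_ns_eq_double_sum:
  assumes "1 \<le> k"
  shows "int (f_ns n k) =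
    (\<Sum>p\<in>{0..min (int k - 1) (int n - int (gamma k))}. \<Sum>m\<in>{p..int n - int (gamma k)}.
      (int n - int (gamma k) + 1 - m) * int (a_ns (nat m) (nat p)))"
proof (cases "gamma k \<le> n")
  case True
  define N where "N = n - gamma k"
  have "int n - int (gamma k) = int N" "min (int k - 1) (int N) = int (min (k - 1) N)"
    using True assms by (auto simp: N_def)
  then show ?thesis
    unfolding f_ns_eq_double_sum_nat[OF assms True, folded N_def]
    by (simp only: of_nat_double_sum_atLeastAtMost)
next
  case False
  then have "min (int k - 1) (int n - int (gamma k)) < 0"
    by simp
  then show ?thesis
    using f_ns_eq_0[OF assms] False by simp
qed

theorem theorem8:
  shows "(\<forall>n. f_ns n 0 = 1) \<and>
    (\<forall>n k. 1 \<le> n \<longrightarrow> 1 \<le> k \<longrightarrow>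
       int (f_ns n k) =
         (\<Sum>p\<in>{0..min (int k - 1) (int n - int (gamma k))}.
            \<Sum>m\<in>{p..int n - int (gamma k)}.
               (int n - int (gamma k) + 1 - m) * int (a_ns (nat m) (nat p))))"
  by (simp add: f_ns_0 int_f_ns_eq_double_sum)

end
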